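(* Let $c,d>0$ with $\frac1c+\frac1d\ge1$ and $g(x)=xF(c,d;c+d;x)$ for $x\in(0,1)$. Then for all $x>0$ and $p,q\in\mathbb{R}$, $$g\!\left(\frac{x^p}{1+x^p}\right)g\!\left(\frac{x^q}{1+x^q}\right)\le g^2\!\left(\frac{x^{(p+q)/2}}{1+x^{(p+q)/2}}\right).$$
   Context: $F(a,b;c;x)$ is the Gaussian hypergeometric function $\sum_{n\ge0}\frac{(a)_n(b)_n}{(c)_n}\frac{x^n}{n!}$ ($|x|<1$), with $(a)_n=a(a+1)\cdots(a+n-1)$, $(a)_0=1$. $g^2(y)=(g(y))^2$. *)

theory Defs
  imports "HOL-Analysis.Analysis"
begin

text \<open>Gaussian hypergeometric function F(a,b;c;x) = sum_n (a)_n (b)_n / (c)_n * x^n / n!,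
  intended for |x| < 1.\<close>
definition hyp2F1 :: "real \<Rightarrow> real \<Rightarrow> real \<Rightarrow> real \<Rightarrow> real" where
  "hyp2F1 a b c x = (\<Sum>n. pochhammer a n * pochhammer b n / pochhammer c n * x ^ n / fact n)"

end

theory Submission
  imports Defs
begin

(*
  Write g(y) = y F(c,d;c+d;y) = \<Sum> a_n y^(n+1) and substitute y = e^t/(1+e^t), so that
  x^r/(1+x^r) corresponds to t = r ln x.  The theorem says that t \<mapsto> ln g(e^t/(1+e^t))
  is midpoint concave; we show that its derivative is antitone.

  Since dy/dt = y(1-y) and g(y) = y(1-y) Z(y) with Z(y) = \<Sum> s_n y^n (s_n the partial sums
  of the a_n), the derivative equals D(y)/Z(y), where D(y) = g'(y) = \<Sum> (n+1) a_n y^n.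
  A Chebyshev-type argument shows that the quotient of two power series is antitone on
  (0,1) as soon as the quotient of their coefficients is antitone; the condition 1/c + 1/d \<ge> 1, i.e. cd \<le> c+d, is exactly what makes
  (n+1) a_n / s_n antitone in n.
*)

section \<open>The logistic substitution\<close>

definition logistic :: "real \<Rightarrow> real" where
  "logistic t = exp t / (1 + exp t)"

lemma logistic_pos: "0 < logistic t"
  unfolding logistic_def by (simp add: add_pos_pos)

lemma logistic_less_1: "logistic t < 1"
  unfolding logistic_def by (simp add: add_pos_pos)

lemma logistic_mono: "s \<le> t \<Longrightarrow> logistic s \<le> logistic t"
  unfolding logistic_def by (simp add: divide_simps add_pos_pos algebra_simps)

lemma logistic_deriv: "(logistic has_real_derivative logistic t * (1 - logistic t)) (at t)"
proof -
  have nz: "1 + exp t \<noteq> 0"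
    using exp_gt_zero[of t] by linarith
  have "((\<lambda>t. exp t / (1 + exp t)) has_real_derivative
        (exp t * (1 + exp t) - exp t * exp t) / ((1 + exp t) * (1 + exp t))) (at t)"
    by (rule derivative_eq_intros refl | use nz in simp)+
  moreover have "(exp t * (1 + exp t) - exp t * exp t) / ((1 + exp t) * (1 + exp t))
      = logistic t * (1 - logistic t)"
    unfolding logistic_def using nz by (simp add: field_simps)
  ultimately show ?thesis
    unfolding logistic_def[abs_def] by simp
qed

lemma powr_over_one_plus_powr: "0 < x \<Longrightarrow> x powr r / (1 + x powr r) = logistic (r * ln x)"
  by (simp add: powr_def logistic_def)

section \<open>Midpoint concavity from an antitone derivative\<close>

text \<open>By the mean value theorem on both halves of [a,b], a function with antitone
  derivative lies above its chords at the midpoint.\<close>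
lemma midpoint_concave_of_antitone_deriv:
  fixes G G' :: "real \<Rightarrow> real"
  assumes deriv: "\<And>x. (G has_real_derivative G' x) (at x)"
    and antitone: "\<And>s t. s \<le> t \<Longrightarrow> G' t \<le> G' s"
  shows "G a + G b \<le> 2 * G ((a + b) / 2)"
proof -
  have less: "G a + G b \<le> 2 * G ((a + b) / 2)" if "a < b" for a b
  proof -
    define m where "m = (a + b) / 2"
    have am: "a < m" and mb: "m < b"
      using that by (auto simp: m_def)
    obtain z1 where z1: "z1 < m" "G m - G a = (m - a) * G' z1"
      using MVT2[OF am deriv] by blast
    obtain z2 where z2: "m < z2" "G b - G m = (b - m) * G' z2"
      using MVT2[OF mb deriv] by blast
    have "G' z2 \<le> G' z1"
      using z1 z2 by (intro antitone) simp
    moreover have "b - m = m - a" "m - a > 0"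
      using am by (auto simp: m_def field_simps)
    ultimately have "(b - m) * G' z2 \<le> (m - a) * G' z1"
      by (simp add: mult_left_mono)
    then show ?thesis
      using z1 z2 by (simp add: m_def[symmetric])
  qed
  consider "a < b" | "a = b" | "b < a"
    by linarith
  then show ?thesis
    by cases (use less[of a b] less[of b a] in \<open>simp_all add: add.commute\<close>)
qed

lemma summable_power_series_linear_bound:
  fixes f :: "nat \<Rightarrow> real"
  assumes bound: "\<And>n. \<bar>f n\<bar> \<le> real n + 1" and y: "\<bar>y\<bar> < 1"
  shows "summable (\<lambda>n. f n * y ^ n)"
proof (rule summable_comparison_test'[where g = "\<lambda>n. (real n + 1) * \<bar>y\<bar> ^ n" and N = 0])
  have "summable (\<lambda>n. diffs (\<lambda>_. 1::real) n * \<bar>y\<bar> ^ n)"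
    by (rule termdiff_converges[where K = 1]) (use y in auto)
  then show "summable (\<lambda>n. (real n + 1) * \<bar>y\<bar> ^ n)"
    by (simp add: diffs_def add.commute)
  show "norm (f n * y ^ n) \<le> (real n + 1) * \<bar>y\<bar> ^ n" for n
    using bound[of n] by (simp add: abs_mult power_abs mult_right_mono)
qed

lemma sums_power_series_shift:
  fixes f :: "nat \<Rightarrow> real"
  assumes "(\<lambda>n. f n * y ^ n) sums A"
  shows "(\<lambda>n. (case n of 0 \<Rightarrow> 0 | Suc m \<Rightarrow> f m) * y ^ n) sums (y * A)"
proof -
  have "(\<lambda>n. y * (f n * y ^ n)) sums (y * A)"
    using assms by (rule sums_mult)
  then have "(\<lambda>n. (case Suc n of 0 \<Rightarrow> 0 | Suc m \<Rightarrow> f m) * y ^ Suc n) sums (y * A)"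
    by (simp add: algebra_simps)
  then show ?thesis
    using sums_Suc_iff[of "\<lambda>n. (case n of 0 \<Rightarrow> 0 | Suc m \<Rightarrow> f m) * y ^ n"] by simp
qed

lemma sums_power_series_partial_sums:
  fixes f :: "nat \<Rightarrow> real"
  assumes "summable (\<lambda>n. (\<Sum>k\<le>n. f k) * y ^ n)"
  shows "(\<lambda>n. f n * y ^ n) sums ((1 - y) * (\<Sum>n. (\<Sum>k\<le>n. f k) * y ^ n))"
proof -
  define S where "S = (\<Sum>n. (\<Sum>k\<le>n. f k) * y ^ n)"
  have sums_S: "(\<lambda>n. (\<Sum>k\<le>n. f k) * y ^ n) sums S"
    using assms unfolding S_def by (rule summable_sums)
  have shifted: "(\<lambda>n. (case n of 0 \<Rightarrow> 0 | Suc m \<Rightarrow> \<Sum>k\<le>m. f k) * y ^ n) sums (y * S)"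
    using sums_S by (rule sums_power_series_shift)
  have "(\<lambda>n. (\<Sum>k\<le>n. f k) * y ^ n - (case n of 0 \<Rightarrow> 0 | Suc m \<Rightarrow> \<Sum>k\<le>m. f k) * y ^ n)
      sums (S - y * S)"
    by (rule sums_diff[OF sums_S shifted])
  moreover have "(\<Sum>k\<le>n. f k) * y ^ n - (case n of 0 \<Rightarrow> 0 | Suc m \<Rightarrow> \<Sum>k\<le>m. f k) * y ^ n
      = f n * y ^ n" for n
    by (cases n) (simp_all add: algebra_simps)
  ultimately show ?thesis
    by (simp add: S_def algebra_simps)
qed

section \<open>A Chebyshev-type comparison of power series\<close>

lemma power_cross_le:
  fixes y1 y2 :: real
  assumes "0 < y1" "y1 \<le> y2" "i \<le> j"
  shows "y1 ^ j * y2 ^ i \<le> y1 ^ i * y2 ^ j"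
proof -
  obtain k where j: "j = i + k"
    using assms(3) le_Suc_ex by blast
  have "(y1 ^ i * y2 ^ i) * y1 ^ k \<le> (y1 ^ i * y2 ^ i) * y2 ^ k"
    using assms by (intro mult_left_mono power_mono) auto
  then show ?thesis
    by (simp add: j power_add algebra_simps)
qed

text \<open>The difference of the two sides is a
  symmetrised double sum whose terms are products of two factors of equal sign.\<close>
lemma power_series_cross_le_finite:
  fixes u s :: "nat \<Rightarrow> real" and y1 y2 :: real
  assumes cross: "\<And>i j. i \<le> j \<Longrightarrow> u j * s i \<le> u i * s j"
    and y: "0 < y1" "y1 \<le> y2"
  shows "(\<Sum>i<N. u i * y2 ^ i) * (\<Sum>j<N. s j * y1 ^ j)
       \<le> (\<Sum>i<N. u i * y1 ^ i) * (\<Sum>j<N. s j * y2 ^ j)"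
proof -
  define T where "T i j = (u i * s j - s i * u j) * (y1 ^ i * y2 ^ j)" for i j
  have term_nonneg: "0 \<le> (u i * s j - s i * u j) * (y1 ^ i * y2 ^ j - y1 ^ j * y2 ^ i)" for i j
  proof (cases "i \<le> j")
    case True
    then show ?thesis
      using cross[OF True] power_cross_le[OF y True] by (simp add: mult.commute)
  next
    case False
    then have "j \<le> i" by simp
    then show ?thesis
      using cross[of j i] power_cross_le[OF y, of j i]
      by (simp add: mult.commute mult_nonpos_nonpos)
  qed
  have difference: "(\<Sum>i<N. u i * y1 ^ i) * (\<Sum>j<N. s j * y2 ^ j)
      - (\<Sum>i<N. u i * y2 ^ i) * (\<Sum>j<N. s j * y1 ^ j) = (\<Sum>i<N. \<Sum>j<N. T i j)"
  proof -
    have "(\<Sum>i<N. u i * y1 ^ i) * (\<Sum>j<N. s j * y2 ^ j)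
        = (\<Sum>i<N. \<Sum>j<N. u i * y1 ^ i * (s j * y2 ^ j))"
      by (simp add: sum_product)
    moreover have "(\<Sum>i<N. u i * y2 ^ i) * (\<Sum>j<N. s j * y1 ^ j)
        = (\<Sum>i<N. \<Sum>j<N. u j * y2 ^ j * (s i * y1 ^ i))"
      by (subst sum.swap) (simp add: sum_product)
    ultimately show ?thesis
      unfolding T_def by (simp add: sum_subtractf[symmetric] algebra_simps)
  qed
  have "2 * (\<Sum>i<N. \<Sum>j<N. T i j) = (\<Sum>i<N. \<Sum>j<N. T i j + T j i)"
    using sum.swap[of T "{..<N}" "{..<N}"] by (simp add: sum.distrib)
  also have "\<dots> = (\<Sum>i<N. \<Sum>j<N. (u i * s j - s i * u j) * (y1 ^ i * y2 ^ j - y1 ^ j * y2 ^ i))"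
    by (intro sum.cong refl) (simp add: T_def algebra_simps)
  also have "\<dots> \<ge> 0"
    using term_nonneg by (intro sum_nonneg) auto
  finally show ?thesis
    using difference by simp
qed

lemma power_series_cross_le:
  fixes u s :: "nat \<Rightarrow> real" and y1 y2 :: real
  assumes cross: "\<And>i j. i \<le> j \<Longrightarrow> u j * s i \<le> u i * s j"
    and y: "0 < y1" "y1 \<le> y2"
    and summable: "\<And>y. y \<in> {y1, y2} \<Longrightarrow> summable (\<lambda>n. u n * y ^ n)"
      "\<And>y. y \<in> {y1, y2} \<Longrightarrow> summable (\<lambda>n. s n * y ^ n)"
  shows "(\<Sum>n. u n * y2 ^ n) * (\<Sum>n. s n * y1 ^ n) \<le> (\<Sum>n. u n * y1 ^ n) * (\<Sum>n. s n * y2 ^ n)"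
proof (rule LIMSEQ_le)
  show "(\<lambda>N. (\<Sum>i<N. u i * y2 ^ i) * (\<Sum>j<N. s j * y1 ^ j))
      \<longlonglongrightarrow> (\<Sum>n. u n * y2 ^ n) * (\<Sum>n. s n * y1 ^ n)"
    using summable by (intro tendsto_mult summable_LIMSEQ) auto
  show "(\<lambda>N. (\<Sum>i<N. u i * y1 ^ i) * (\<Sum>j<N. s j * y2 ^ j))
      \<longlonglongrightarrow> (\<Sum>n. u n * y1 ^ n) * (\<Sum>n. s n * y2 ^ n)"
    using summable by (intro tendsto_mult summable_LIMSEQ) auto
  show "\<exists>N0. \<forall>N\<ge>N0. (\<Sum>i<N. u i * y2 ^ i) * (\<Sum>j<N. s j * y1 ^ j)
      \<le> (\<Sum>i<N. u i * y1 ^ i) * (\<Sum>j<N. s j * y2 ^ j)"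
    using power_series_cross_le_finite[of u s y1 y2] cross y by blast
qed

section \<open>The coefficients of F(c,d;c+d;y)\<close>

definition hg_coeff :: "real \<Rightarrow> real \<Rightarrow> nat \<Rightarrow> real" where
  "hg_coeff c d n = pochhammer c n * pochhammer d n / pochhammer (c + d) n / fact n"

definition hg_psum :: "real \<Rightarrow> real \<Rightarrow> nat \<Rightarrow> real" where
  "hg_psum c d n = (\<Sum>k\<le>n. hg_coeff c d k)"

lemma hyp2F1_eq_hg_coeff: "hyp2F1 c d (c + d) y = (\<Sum>n. hg_coeff c d n * y ^ n)"
  by (simp add: hyp2F1_def hg_coeff_def)

text \<open>The function g(y) = y F(c,d;c+d;y) of the theorem, the power series D of its
  derivative, and the power series Z of the partial sums, so that g = y (1 - y) Z.\<close>
definition xhyp2F1 :: "real \<Rightarrow> real \<Rightarrow> real \<Rightarrow> real" where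
  "xhyp2F1 c d y = y * hyp2F1 c d (c + d) y"

definition hg_deriv_series :: "real \<Rightarrow> real \<Rightarrow> real \<Rightarrow> real" where
  "hg_deriv_series c d y = (\<Sum>n. (real n + 1) * hg_coeff c d n * y ^ n)"

definition hg_psum_series :: "real \<Rightarrow> real \<Rightarrow> real \<Rightarrow> real" where
  "hg_psum_series c d y = (\<Sum>n. hg_psum c d n * y ^ n)"

context
  fixes c d :: real
  assumes c_pos: "0 < c" and d_pos: "0 < d"
begin

lemma hg_coeff_pos: "0 < hg_coeff c d n"
  unfolding hg_coeff_def using c_pos d_pos
  by (auto intro!: divide_pos_pos mult_pos_pos pochhammer_pos)

lemma hg_psum_pos: "0 < hg_psum c d n"
  unfolding hg_psum_def using hg_coeff_pos by (intro sum_pos) auto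

lemma hg_coeff_Suc:
  "hg_coeff c d (Suc n) * ((c + d + n) * (n + 1)) = hg_coeff c d n * ((c + n) * (d + n))"
proof -
  have "pochhammer (c + d) n > 0" and M_pos: "c + d + n > 0"
    using c_pos d_pos by (auto intro!: pochhammer_pos)
  then have "hg_coeff c d (Suc n) = hg_coeff c d n * ((c + n) * (d + n)) / ((c + d + n) * (n + 1))"
    unfolding hg_coeff_def by (simp add: pochhammer_Suc fact_Suc field_simps)
  then show ?thesis
    using M_pos by simp
qed

lemma hg_psum_bound: "hg_psum c d n * (c * d) \<le> hg_coeff c d n * ((c + n) * (d + n))"
proof (induction n)
  case 0
  then show ?case by (simp add: hg_psum_def)
next
  case (Suc n)
  have "hg_psum c d (Suc n) * (c * d) = hg_psum c d n * (c * d) + hg_coeff c d (Suc n) * (c * d)"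
    by (simp add: hg_psum_def algebra_simps)
  also have "\<dots> \<le> hg_coeff c d (Suc n) * ((c + d + n) * (n + 1) + c * d)"
    using Suc hg_coeff_Suc[of n] by (simp add: algebra_simps)
  also have "\<dots> \<le> hg_coeff c d (Suc n) * ((c + Suc n) * (d + Suc n))"
    using hg_coeff_pos[of "Suc n"] by (intro mult_left_mono) (auto simp: algebra_simps)
  finally show ?case .
qed

context
  assumes cd_le: "c * d \<le> c + d"
begin

text \<open>The coefficients decrease from a_0 = 1, hence lie in (0,1].\<close>
lemma hg_coeff_le_1: "hg_coeff c d n \<le> 1"
proof (induction n)
  case 0
  then show ?case by (simp add: hg_coeff_def)
next
  case (Suc n)
  have "(c + n) * (d + n) \<le> (c + d + n) * (n + 1)"
    using cd_le by (simp add: algebra_simps)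
  then have "hg_coeff c d (Suc n) * ((c + d + n) * (n + 1)) \<le> hg_coeff c d n * ((c + d + n) * (n + 1))"
    unfolding hg_coeff_Suc using hg_coeff_pos[of n] by (intro mult_left_mono) auto
  then have "hg_coeff c d (Suc n) \<le> hg_coeff c d n"
    using c_pos d_pos by (simp add: mult_le_cancel_right add_pos_nonneg)
  then show ?case
    using Suc by linarith
qed

lemma hg_psum_le: "hg_psum c d n \<le> real n + 1"
proof -
  have "hg_psum c d n \<le> (\<Sum>k\<le>n. (1::real))"
    unfolding hg_psum_def by (intro sum_mono hg_coeff_le_1)
  then show ?thesis by simp
qed

text \<open>One step of the monotonicity of (n+1) a_n / s_n; here cd \<le> c+d enters.\<close>
lemma hg_ratio_step:
  "(n + 2) * hg_coeff c d (Suc n) * hg_psum c d n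
   \<le> (n + 1) * hg_coeff c d n * hg_psum c d (Suc n)"
proof -
  define a where "a = hg_coeff c d n"
  define b where "b = hg_coeff c d (Suc n)"
  define s where "s = hg_psum c d n"
  define P where "P = (c + n) * (d + n)"
  define M where "M = (c + d + n) * (n + 1)"
  define N where "N = (n + 2) * P - (n + 1) * M"
  have a_pos: "a > 0" and s_pos: "s > 0" and P_pos: "P > 0" and M_pos: "M > 0"
    using hg_coeff_pos hg_psum_pos c_pos d_pos by (auto simp: a_def s_def P_def M_def)
  have recurrence: "b * M = a * P"
    using hg_coeff_Suc[of n] by (simp add: a_def b_def M_def P_def)
  have s_bound: "s * (c * d) \<le> a * P"
    using hg_psum_bound[of n] by (simp add: s_def a_def P_def)
  have N_le: "N \<le> (n + 1) * (c * d)"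
    using cd_le by (simp add: N_def P_def M_def algebra_simps)
  have key: "s * N \<le> (n + 1) * a * P"
  proof (cases "N \<le> 0")
    case True
    then have "s * N \<le> 0"
      using s_pos by (simp add: mult_nonneg_nonpos)
    also have "0 \<le> (n + 1) * a * P"
      using a_pos P_pos by simp
    finally show ?thesis .
  next
    case False
    have "(s * N) * (c * d) = (s * (c * d)) * N" by simp
    also have "\<dots> \<le> (a * P) * ((n + 1) * (c * d))"
      using a_pos P_pos False by (intro mult_mono[OF s_bound N_le]) auto
    also have "\<dots> = ((n + 1) * a * P) * (c * d)"
      by (simp add: algebra_simps)
    finally show ?thesis
      by (rule mult_right_le_imp_le) (use c_pos d_pos in simp)
  qed
  have "((n + 1) * a * (s + b) - (n + 2) * b * s) * M
      = (n + 1) * a * s * M + ((n + 1) * a - (n + 2) * s) * (b * M)"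
    by (simp add: algebra_simps)
  also have "\<dots> = a * ((n + 1) * a * P - s * N)"
    unfolding recurrence by (simp add: N_def algebra_simps)
  also have "\<dots> \<ge> 0"
    using a_pos key by simp
  finally have "0 \<le> (n + 1) * a * (s + b) - (n + 2) * b * s"
    using M_pos by (simp add: zero_le_mult_iff)
  then show ?thesis
    by (simp add: a_def b_def s_def hg_psum_def add.commute)
qed

lemma hg_ratio_antitone:
  assumes "i \<le> j"
  shows "(real j + 1) * hg_coeff c d j * hg_psum c d i \<le> (real i + 1) * hg_coeff c d i * hg_psum c d j"
proof -
  have "decseq (\<lambda>n. (real n + 1) * hg_coeff c d n / hg_psum c d n)"
  proof (rule decseq_SucI)
    fix n
    show "(real (Suc n) + 1) * hg_coeff c d (Suc n) / hg_psum c d (Suc n)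
        \<le> (real n + 1) * hg_coeff c d n / hg_psum c d n"
      using hg_ratio_step[of n] hg_psum_pos[of n] hg_psum_pos[of "Suc n"]
      by (simp add: divide_simps algebra_simps)
  qed
  then show ?thesis
    using decseqD[OF _ assms] hg_psum_pos[of i] hg_psum_pos[of j]
    by (fastforce simp: divide_simps mult.commute)
qed

section \<open>The function g and its logarithmic derivative\<close>

text \<open>All three power series converge in the unit disc, as their coefficients grow at
  most linearly.\<close>
lemma abs_hg_coeff_le_1: "\<bar>hg_coeff c d n\<bar> \<le> 1"
  using hg_coeff_pos[of n] hg_coeff_le_1[of n] by simp

lemma summable_hg_coeff: "\<bar>y\<bar> < 1 \<Longrightarrow> summable (\<lambda>n. hg_coeff c d n * y ^ n)"
  using abs_hg_coeff_le_1
  by (intro summable_power_series_linear_bound) (auto intro: order_trans[of _ 1])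

lemma summable_hg_deriv: "\<bar>y\<bar> < 1 \<Longrightarrow> summable (\<lambda>n. ((real n + 1) * hg_coeff c d n) * y ^ n)"
  using abs_hg_coeff_le_1
  by (intro summable_power_series_linear_bound) (auto simp: abs_mult mult_left_le)

lemma summable_hg_psum: "\<bar>y\<bar> < 1 \<Longrightarrow> summable (\<lambda>n. hg_psum c d n * y ^ n)"
  using hg_psum_pos hg_psum_le
  by (intro summable_power_series_linear_bound) (auto simp: less_imp_le)

lemma xhyp2F1_sums:
  assumes "\<bar>y\<bar> < 1"
  shows "(\<lambda>n. (case n of 0 \<Rightarrow> 0 | Suc m \<Rightarrow> hg_coeff c d m) * y ^ n) sums xhyp2F1 c d y"
  unfolding xhyp2F1_def hyp2F1_eq_hg_coeff
  using summable_hg_coeff[OF assms] by (intro sums_power_series_shift summable_sums)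

lemma xhyp2F1_deriv:
  assumes y: "\<bar>y\<bar> < 1"
  shows "(xhyp2F1 c d has_real_derivative hg_deriv_series c d y) (at y)"
proof -
  define f where "f n = (case n of 0 \<Rightarrow> 0 | Suc m \<Rightarrow> hg_coeff c d m)" for n
  have f_sums: "norm z < 1 \<Longrightarrow> (\<lambda>n. f n * z ^ n) sums xhyp2F1 c d z" for z :: real
    using xhyp2F1_sums[of z] by (simp add: f_def)
  have "((\<lambda>z. \<Sum>n. f n * z ^ n) has_real_derivative (\<Sum>n. diffs f n * y ^ n)) (at y)"
    using termdiffs_strong'[where K = 1, OF sums_summable[OF f_sums]] y by simp
  moreover have "diffs f = (\<lambda>n. (real n + 1) * hg_coeff c d n)"
    by (simp add: diffs_def f_def add.commute)
  ultimately have series_deriv: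
      "((\<lambda>z. \<Sum>n. f n * z ^ n) has_real_derivative hg_deriv_series c d y) (at y)"
    by (simp add: hg_deriv_series_def)
  have same: "(\<Sum>n. f n * z ^ n) = xhyp2F1 c d z" if "z \<in> ball 0 1" for z
    using f_sums[of z] that by (simp add: sums_iff)
  have "y \<in> ball 0 1"
    using y by simp
  from has_field_derivative_transform_within_open[OF series_deriv open_ball this same]
  show ?thesis .
qed

lemma xhyp2F1_eq_psum_series:
  assumes "\<bar>y\<bar> < 1"
  shows "xhyp2F1 c d y = y * (1 - y) * hg_psum_series c d y"
proof -
  have "(\<lambda>n. hg_coeff c d n * y ^ n) sums ((1 - y) * hg_psum_series c d y)"
    unfolding hg_psum_series_def hg_psum_def
    using summable_hg_psum[OF assms] by (intro sums_power_series_partial_sums) (simp add: hg_psum_def)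
  then show ?thesis
    by (simp add: xhyp2F1_def hyp2F1_eq_hg_coeff sums_iff)
qed

lemma hg_psum_series_pos:
  assumes "0 \<le> y" "y < 1"
  shows "0 < hg_psum_series c d y"
  unfolding hg_psum_series_def
proof (rule suminf_pos2[where i = 0])
  show "summable (\<lambda>n. hg_psum c d n * y ^ n)"
    using assms by (intro summable_hg_psum) simp
  show "0 \<le> hg_psum c d n * y ^ n" for n
    using assms hg_psum_pos[of n] by simp
  show "0 < hg_psum c d 0 * y ^ 0"
    using hg_psum_pos[of 0] by simp
qed

lemma xhyp2F1_pos: "0 < y \<Longrightarrow> y < 1 \<Longrightarrow> 0 < xhyp2F1 c d y"
  using xhyp2F1_eq_psum_series[of y] hg_psum_series_pos[of y] by simp

text \<open>Since g = y (1 - y) Z and d(logistic)/dt = y (1 - y), the derivative of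
  ln g(logistic t) is D(y)/Z(y) at y = logistic t.\<close>
lemma log_xhyp2F1_logistic_deriv:
  "((\<lambda>t. ln (xhyp2F1 c d (logistic t))) has_real_derivative
      hg_deriv_series c d (logistic t) / hg_psum_series c d (logistic t)) (at t)"
proof -
  have y0: "0 < logistic t" and y1: "logistic t < 1"
    by (rule logistic_pos, rule logistic_less_1)
  then have y_abs: "\<bar>logistic t\<bar> < 1" by simp
  have inner: "((\<lambda>t. xhyp2F1 c d (logistic t)) has_real_derivative
      hg_deriv_series c d (logistic t) * (logistic t * (1 - logistic t))) (at t)"
    using DERIV_chain2[OF xhyp2F1_deriv[OF y_abs] logistic_deriv] by simp
  have "((\<lambda>t. ln (xhyp2F1 c d (logistic t))) has_real_derivative
      1 / xhyp2F1 c d (logistic t) * (hg_deriv_series c d (logistic t) * (logistic t * (1 - logistic t)))) (at t)"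
    using DERIV_chain2[where f = ln, OF DERIV_ln_divide[OF xhyp2F1_pos[OF y0 y1]] inner] by simp
  moreover have "1 / xhyp2F1 c d (logistic t) * (hg_deriv_series c d (logistic t) * (logistic t * (1 - logistic t)))
      = hg_deriv_series c d (logistic t) / hg_psum_series c d (logistic t)"
    unfolding xhyp2F1_eq_psum_series[OF y_abs]
    using y0 y1 hg_psum_series_pos[of "logistic t"] by (simp add: field_simps)
  ultimately show ?thesis
    by simp
qed

lemma hg_log_deriv_antitone:
  assumes "y1 \<le> y2" "0 < y1" "y2 < 1"
  shows "hg_deriv_series c d y2 / hg_psum_series c d y2 \<le> hg_deriv_series c d y1 / hg_psum_series c d y1"
proof -
  have "hg_deriv_series c d y2 * hg_psum_series c d y1 \<le> hg_deriv_series c d y1 * hg_psum_series c d y2"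
    unfolding hg_deriv_series_def hg_psum_series_def
    using assms hg_ratio_antitone summable_hg_deriv summable_hg_psum
    by (intro power_series_cross_le) auto
  then show ?thesis
    using assms hg_psum_series_pos[of y1] hg_psum_series_pos[of y2] by (simp add: divide_simps)
qed

lemma xhyp2F1_logistic_midpoint:
  "xhyp2F1 c d (logistic a) * xhyp2F1 c d (logistic b) \<le> (xhyp2F1 c d (logistic ((a + b) / 2))) ^ 2"
proof -
  have pos: "0 < xhyp2F1 c d (logistic t)" for t
    using xhyp2F1_pos[OF logistic_pos logistic_less_1] .
  have "ln (xhyp2F1 c d (logistic a)) + ln (xhyp2F1 c d (logistic b))
      \<le> 2 * ln (xhyp2F1 c d (logistic ((a + b) / 2)))"
    using log_xhyp2F1_logistic_deriv hg_log_deriv_antitone logistic_mono logistic_pos logistic_less_1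
    by (intro midpoint_concave_of_antitone_deriv) auto
  then have "ln (xhyp2F1 c d (logistic a) * xhyp2F1 c d (logistic b))
      \<le> ln ((xhyp2F1 c d (logistic ((a + b) / 2))) ^ 2)"
    using pos[of a] pos[of b] pos[of "(a + b) / 2"] by (simp add: ln_mult ln_realpow)
  then show ?thesis
    using pos[of a] pos[of b] pos[of "(a + b) / 2"] by simp
qed

end

end

theorem mainTheorem15:
  fixes c d x p q :: real
    and g :: "real \<Rightarrow> real"
  assumes "c > 0" and "d > 0" and "1 / c + 1 / d \<ge> 1"
    and "\<And>y. 0 < y \<Longrightarrow> y < 1 \<Longrightarrow> g y = y * hyp2F1 c d (c + d) y"
    and "x > 0"
  shows "g (x powr p / (1 + x powr p)) * g (x powr q / (1 + x powr q))
         \<le> (g (x powr ((p + q) / 2) / (1 + x powr ((p + q) / 2)))) ^ 2"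
proof -
  have "1 \<le> (c + d) / (c * d)"
    using assms(1-3) by (simp add: field_simps)
  then have cd_le: "c * d \<le> c + d"
    using assms(1,2) by (simp add: le_divide_eq)
  have g_logistic: "g (logistic t) = xhyp2F1 c d (logistic t)" for t
    using assms(4)[OF logistic_pos logistic_less_1] by (simp add: xhyp2F1_def)
  have midpoint: "(p * ln x + q * ln x) / 2 = (p + q) / 2 * ln x"
    by (simp add: field_simps)
  show ?thesis
    unfolding powr_over_one_plus_powr[OF assms(5)] g_logistic
    using xhyp2F1_logistic_midpoint[OF assms(1,2) cd_le, of "p * ln x" "q * ln x"]
    by (simp only: midpoint)
qed

end
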